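(* Let $A$ be a $3\times3$ matrix with pairwise distinct eigenvalues $\lambda_1,\lambda_2,\lambda_3$ such that $\lambda_1+\lambda_2\neq 0$, and let $h>0$. Define $$\phi=\frac{(\lambda_3^2-\lambda_2^2)(\lambda_2^2e^{\lambda_1h}-\lambda_1^2e^{\lambda_2h})-(\lambda_2^2-\lambda_1^2)(\lambda_3^2e^{\lambda_2h}-\lambda_2^2e^{\lambda_3h})}{\lambda_1\lambda_2(\lambda_2-\lambda_1)(\lambda_3^2-\lambda_2^2)-\lambda_2\lambda_3(\lambda_3-\lambda_2)(\lambda_2^2-\lambda_1^2)},$$ $$\psi=\frac{\lambda_2^2e^{\lambda_1h}-\lambda_1^2e^{\lambda_2h}-\lambda_1\lambda_2(\lambda_2-\lambda_1)\phi}{\lambda_2^2-\lambda_1^2},\qquad \theta=\frac{e^{\lambda_3h}-\psi-\lambda_3\phi}{\lambda_3^2\phi^2}.$$ Then (whenever these expressions are defined) the explicit difference scheme $$\frac{\mathbf{x}_{k+1}-\psi\mathbf{x}_k}{\phi}=A\mathbf{x}_k+\theta\phi A^2\mathbf{x}_k$$ is exact for the system $\mathbf{x}'=A\mathbf{x}$.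
   Context: A one-step difference scheme with step size $h>0$ for $\mathbf{x}'=M\mathbf{x}$ is called exact if for every initial vector $\mathbf{x}_0$ the sequence $(\mathbf{x}_k)$ it generates satisfies $\mathbf{x}_k=\mathbf{x}(kh)$ for all $k\ge 0$, where $\mathbf{x}(t)$ solves $\mathbf{x}'=M\mathbf{x}$, $\mathbf{x}(0)=\mathbf{x}_0$. *)

theory Defs
  imports "HOL-Analysis.Analysis"
begin

definition is_eigenvalue :: "complex^'n^'n \<Rightarrow> complex \<Rightarrow> bool" where
  "is_eigenvalue M l \<longleftrightarrow> (\<exists>v. v \<noteq> 0 \<and> M *v v = l *s v)"

definition exact_scheme ::
  "(complex^'n \<Rightarrow> complex^'n \<Rightarrow> bool) \<Rightarrow> real \<Rightarrow> complex^'n^'n \<Rightarrow> bool" where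
  "exact_scheme step h M \<longleftrightarrow>
     (\<forall>xs x. (\<forall>k. step (xs k) (xs (Suc k))) \<and>
        x 0 = xs 0 \<and>
        (\<forall>t\<ge>0. (x has_vector_derivative (M *v x t)) (at t within {0..}))
        \<longrightarrow> (\<forall>k. xs k = x (real k * h)))"

end

theory Submission
  imports Defs
begin

(* The scheme is x(k+1) = P x(k) with P = \<psi> + \<phi> A + \<theta> \<phi>^2 A^2, and the formulas for
   \<phi>, \<psi>, \<theta> say precisely that the quadratic p(z) = \<psi> + \<phi> z + \<theta> \<phi>^2 z^2 interpolates
   exp (z h) at the three eigenvalues. As the eigenvalues are distinct, the Lagrange operators
   G_i = \<Prod>_{j \<noteq> i} (A - \<lambda>_j) map into the \<lambda>_i-eigenspace and together recover every vector.
   Along a solution x, G_i x(t) solves g' = \<lambda>_i g, so G_i x(t + h) and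
   G_i (P x(t)) = p(\<lambda>_i) G_i x(t) both equal exp (\<lambda>_i h) G_i x(t); hence P x(t) = x(t + h). *)

definition mpoly2 ::
  "complex^'n^'n \<Rightarrow> complex \<Rightarrow> complex \<Rightarrow> complex \<Rightarrow> complex^'n \<Rightarrow> complex^'n" where
  "mpoly2 A a b c y = a *s (A *v (A *v y)) + b *s (A *v y) + c *s y"

lemma mpoly2_add: "mpoly2 A a b c (y + z) = mpoly2 A a b c y + mpoly2 A a b c z"
  by (simp add: mpoly2_def matrix_vector_right_distrib vec_eq_iff algebra_simps)

lemma mpoly2_scale: "mpoly2 A a b c (k *s y) = k *s mpoly2 A a b c y"
  by (simp add: mpoly2_def vec.scale vec_eq_iff algebra_simps)

lemma mpoly2_commute: "mpoly2 A a b c (mpoly2 A a' b' c' y) = mpoly2 A a' b' c' (mpoly2 A a b c y)"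
  by (simp add: mpoly2_def vec.scale matrix_vector_right_distrib vec_eq_iff algebra_simps)

lemma mpoly2_matrix_commute: "mpoly2 A a b c (A *v y) = A *v mpoly2 A a b c y"
  by (simp add: mpoly2_def vec.scale matrix_vector_right_distrib)

lemma mpoly2_eigenvector:
  assumes "A *v v = l *s v"
  shows "mpoly2 A a b c v = (a * l\<^sup>2 + b * l + c) *s v"
proof -
  have "A *v (A *v v) = (l * l) *s v"
    using assms by (simp add: vec.scale vector_smult_assoc)
  then show ?thesis
    unfolding mpoly2_def assms by (simp add: vec_eq_iff algebra_simps power2_eq_square)
qed

lemma linear_mpoly2: "linear (mpoly2 A a b c)"
proof -
  have scaleR_eq: "r *\<^sub>R y = complex_of_real r *s y" for r :: real and y :: "complex^'n"
    by (simp add: vec_eq_iff, simp add: scaleR_conv_of_real)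
  show ?thesis
    by (intro linearI) (simp_all add: scaleR_eq mpoly2_add mpoly2_scale)
qed

lemma mpoly2_eq_0_imp_eigenvector:
  assumes "mpoly2 A 0 1 (- l) z = 0"
  shows "A *v z = l *s z"
  using assms by (simp add: mpoly2_def vec_eq_iff)

lemma lagrange_decomposition:
  fixes l1 l2 l3 :: complex
  assumes "l1 \<noteq> l2" "l1 \<noteq> l3" "l2 \<noteq> l3"
  shows "y = (1 / ((l1 - l2) * (l1 - l3))) *s mpoly2 A 1 (- (l2 + l3)) (l2 * l3) y
           + (1 / ((l2 - l1) * (l2 - l3))) *s mpoly2 A 1 (- (l1 + l3)) (l1 * l3) y
           + (1 / ((l3 - l1) * (l3 - l2))) *s mpoly2 A 1 (- (l1 + l2)) (l1 * l2) y"
proof -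
  have "l1 - l2 \<noteq> 0" "l1 - l3 \<noteq> 0" "l2 - l3 \<noteq> 0" "l2 - l1 \<noteq> 0" "l3 - l1 \<noteq> 0" "l3 - l2 \<noteq> 0"
    using assms by auto
  then show ?thesis
    by (simp add: vec_eq_iff mpoly2_def divide_simps) (simp add: algebra_simps)
qed

lemma scalar_linear_ode_solution:
  fixes g :: "real \<Rightarrow> complex"
  assumes deriv: "\<And>s. s \<ge> 0 \<Longrightarrow> (g has_vector_derivative (l * g s)) (at s within {0..})"
    and "t \<ge> 0"
  shows "g t = exp (l * t) * g 0"
proof -
  define f where "f s = exp (- (l * s)) * g s" for s :: real
  have "(f has_vector_derivative 0) (at s within {0..})" if "s \<in> {0..}" for s
  proof -
    have "((\<lambda>z. exp (- (l * z))) has_field_derivative (- l * exp (- (l * s)))) (at (of_real s))"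
      by (auto intro!: derivative_eq_intros)
    from has_vector_derivative_real_field[OF this]
    have "(f has_vector_derivative (exp (- (l * s)) * (l * g s) + (- l * exp (- (l * s))) * g s))
        (at s within {0..})"
      unfolding f_def using that deriv by (intro has_vector_derivative_mult) auto
    then show ?thesis
      by (simp add: algebra_simps)
  qed
  then obtain c where "\<And>s. s \<in> {0..} \<Longrightarrow> f s = c"
    using has_vector_derivative_zero_constant[of "{0..}" f] by (metis convex_real_interval(1))
  then have "f t = f 0"
    using \<open>t \<ge> 0\<close> by simp
  then show ?thesis
    by (simp add: f_def exp_minus field_simps)
qed

lemma linear_ode_intertwined_image:
  fixes A :: "complex^'n^'n" and L :: "complex^'n \<Rightarrow> complex^'m"
  assumes "linear L"
    and intertwine: "\<And>y. L (A *v y) = l *s L y"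
    and sol: "\<And>s. s \<ge> 0 \<Longrightarrow> (x has_vector_derivative (A *v x s)) (at s within {0..})"
    and "t \<ge> 0"
  shows "L (x t) = exp (l * t) *s L (x 0)"
proof -
  have "L (x t) $ j = exp (l * t) * L (x 0) $ j" for j
  proof (rule scalar_linear_ode_solution[OF _ \<open>t \<ge> 0\<close>])
    fix s :: real
    assume "s \<ge> 0"
    have "bounded_linear (\<lambda>y. L y $ j)"
      using \<open>linear L\<close> by (simp add: linear_conv_bounded_linear bounded_linear_compose[OF bounded_linear_vec_nth])
    from bounded_linear.has_vector_derivative[OF this sol[OF \<open>s \<ge> 0\<close>]]
    show "((\<lambda>s. L (x s) $ j) has_vector_derivative l * L (x s) $ j) (at s within {0..})"
      by (simp add: intertwine)
  qed
  then show ?thesis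
    by (simp add: vec_eq_iff)
qed

lemma eigenvectors3_span:
  fixes A :: "complex^3^3"
  assumes v1: "v1 \<noteq> 0" "A *v v1 = l1 *s v1"
    and v2: "v2 \<noteq> 0" "A *v v2 = l2 *s v2"
    and v3: "v3 \<noteq> 0" "A *v v3 = l3 *s v3"
    and distinct: "l1 \<noteq> l2" "l1 \<noteq> l3" "l2 \<noteq> l3"
  shows "\<exists>a b c. y = a *s v1 + b *s v2 + c *s v3"
proof -
  let ?G = "mpoly2 A 1 (- (l2 + l3)) (l2 * l3)"
  have G: "?G v1 = ((l1 - l2) * (l1 - l3)) *s v1" "?G v2 = 0" "?G v3 = 0"
    by (simp_all add: mpoly2_eigenvector v1 v2 v3 algebra_simps power2_eq_square)
  have v1_indep: "v1 \<notin> vec.span {v2, v3}"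
  proof
    assume "v1 \<in> vec.span {v2, v3}"
    then obtain k m where "v1 - k *s v2 - m *s v3 = 0"
      by (auto simp: vec.span_insert vec.span_empty)
    then have "v1 = k *s v2 + m *s v3"
      by (simp add: algebra_simps)
    then have "?G v1 = 0"
      by (simp only: mpoly2_add mpoly2_scale G) simp
    with G(1) distinct v1(1) show False
      by simp
  qed
  have v2_indep: "v2 \<notin> vec.span {v3}"
  proof
    assume "v2 \<in> vec.span {v3}"
    then obtain k where "v2 = k *s v3"
      by (auto simp: vec.span_insert vec.span_empty eq_diff_eq)
    then have "mpoly2 A 0 1 (- l3) v2 = 0"
      by (simp add: mpoly2_scale mpoly2_eigenvector v3)
    with distinct v2 show False
      by (simp add: mpoly2_eigenvector)
  qed
  have "v1 \<noteq> v2" "v1 \<noteq> v3" "v2 \<noteq> v3"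
    using v1_indep v2_indep by (auto intro: vec.span_base)
  then have "vec.independent {v1, v2, v3}" "card {v1, v2, v3} = 3"
    using v1_indep v2_indep v3(1) by (simp_all add: vec.independent_insert vec.span_empty)
  then have "y \<in> vec.span {v1, v2, v3}"
    using vec.card_ge_dim_independent[of "{v1, v2, v3}" UNIV]
    by (auto simp: vec_dim_card card_cart_basis)
  then obtain a b c where "y - a *s v1 - b *s v2 = c *s v3"
    by (auto simp: vec.span_insert vec.span_empty)
  then have "y = a *s v1 + b *s v2 + c *s v3"
    by (simp add: algebra_simps)
  then show ?thesis
    by blast
qed

lemma distinct_eigenvalues3_annihilate:
  fixes A :: "complex^3^3"
  assumes "is_eigenvalue A l1" "is_eigenvalue A l2" "is_eigenvalue A l3"
    and distinct: "l1 \<noteq> l2" "l1 \<noteq> l3" "l2 \<noteq> l3"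
  shows "A *v mpoly2 A 1 (- (l1 + l2)) (l1 * l2) y = l3 *s mpoly2 A 1 (- (l1 + l2)) (l1 * l2) y"
proof -
  obtain v1 v2 v3 where v1: "v1 \<noteq> 0" "A *v v1 = l1 *s v1"
    and v2: "v2 \<noteq> 0" "A *v v2 = l2 *s v2" and v3: "v3 \<noteq> 0" "A *v v3 = l3 *s v3"
    using assms(1-3) unfolding is_eigenvalue_def by blast
  let ?N = "\<lambda>z. mpoly2 A 0 1 (- l3) (mpoly2 A 1 (- (l1 + l2)) (l1 * l2) z)"
  have N: "?N v = ((l - l1) * (l - l2) * (l - l3)) *s v" if "A *v v = l *s v" for v l
  proof -
    have "?N v = ((0 * l\<^sup>2 + 1 * l + - l3) * (1 * l\<^sup>2 + - (l1 + l2) * l + l1 * l2)) *s v"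
      unfolding mpoly2_eigenvector[OF that] mpoly2_scale vector_smult_assoc by (simp only: mult.commute)
    then show ?thesis
      by (simp add: algebra_simps power2_eq_square)
  qed
  have "?N v1 = 0" "?N v2 = 0" "?N v3 = 0"
    unfolding N[OF v1(2)] N[OF v2(2)] N[OF v3(2)] by simp_all
  moreover obtain a b c where "y = a *s v1 + b *s v2 + c *s v3"
    using eigenvectors3_span[OF v1 v2 v3 distinct] by blast
  ultimately have "?N y = 0"
    by (simp add: mpoly2_add mpoly2_scale)
  then show ?thesis
    by (rule mpoly2_eq_0_imp_eigenvector)
qed

lemma eigencomponent_time_shift:
  fixes A :: "complex^'n^'n"
  assumes eigen: "\<And>y. A *v mpoly2 A a' b' c' y = l *s mpoly2 A a' b' c' y"
    and interp: "a * l\<^sup>2 + b * l + c = exp (l * h)"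
    and sol: "\<And>s. s \<ge> 0 \<Longrightarrow> (x has_vector_derivative (A *v x s)) (at s within {0..})"
    and "t \<ge> 0" "t + h \<ge> 0"
  shows "mpoly2 A a' b' c' (x (t + h)) = mpoly2 A a' b' c' (mpoly2 A a b c (x t))"
proof -
  let ?G = "mpoly2 A a' b' c'"
  have flow: "?G (x s) = exp (l * s) *s ?G (x 0)" if "s \<ge> 0" for s
    by (rule linear_ode_intertwined_image[OF linear_mpoly2 _ sol that])
      (simp add: mpoly2_matrix_commute eigen)
  have "?G (x (t + h)) = exp (l * h) *s ?G (x t)"
  proof -
    have "exp (l * (t + h)) = exp (l * h) * exp (l * t)"
      by (simp add: distrib_left exp_add mult.commute)
    then show ?thesis
      unfolding flow[OF \<open>t + h \<ge> 0\<close>] flow[OF \<open>t \<ge> 0\<close>] by (simp add: vector_smult_assoc)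
  qed
  also have "\<dots> = mpoly2 A a b c (?G (x t))"
    by (simp only: mpoly2_eigenvector[OF eigen] interp)
  finally show ?thesis
    by (simp add: mpoly2_commute)
qed

lemma time_shift_eq_mpoly2:
  fixes A :: "complex^3^3"
  assumes eigenvalues: "is_eigenvalue A l1" "is_eigenvalue A l2" "is_eigenvalue A l3"
    and distinct: "l1 \<noteq> l2" "l1 \<noteq> l3" "l2 \<noteq> l3"
    and interp: "a * l1\<^sup>2 + b * l1 + c = exp (l1 * h)" "a * l2\<^sup>2 + b * l2 + c = exp (l2 * h)"
      "a * l3\<^sup>2 + b * l3 + c = exp (l3 * h)"
    and sol: "\<And>s. s \<ge> 0 \<Longrightarrow> (x has_vector_derivative (A *v x s)) (at s within {0..})"
    and "t \<ge> 0" "h \<ge> 0"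
  shows "x (t + h) = mpoly2 A a b c (x t)"
proof -
  have "t + h \<ge> 0"
    using \<open>t \<ge> 0\<close> \<open>h \<ge> 0\<close> by simp
  note annihilate = distinct_eigenvalues3_annihilate[of A]
  have G1: "A *v mpoly2 A 1 (- (l2 + l3)) (l2 * l3) y = l1 *s mpoly2 A 1 (- (l2 + l3)) (l2 * l3) y" for y
    using annihilate[OF eigenvalues(2,3,1)] distinct by simp
  have G2: "A *v mpoly2 A 1 (- (l1 + l3)) (l1 * l3) y = l2 *s mpoly2 A 1 (- (l1 + l3)) (l1 * l3) y" for y
    using annihilate[OF eigenvalues(1,3,2)] distinct by simp
  have G3: "A *v mpoly2 A 1 (- (l1 + l2)) (l1 * l2) y = l3 *s mpoly2 A 1 (- (l1 + l2)) (l1 * l2) y" for y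
    using annihilate[OF eigenvalues] distinct by simp
  note shift = eigencomponent_time_shift[OF _ _ sol \<open>t \<ge> 0\<close> \<open>t + h \<ge> 0\<close>]
  show ?thesis
    by (subst (1 2) lagrange_decomposition[OF distinct, where A = A])
      (simp only: shift[OF G1 interp(1)] shift[OF G2 interp(2)] shift[OF G3 interp(3)])
qed

lemma exact_schemeI:
  assumes step: "\<And>u v. step u v \<Longrightarrow> v = F u" and "h \<ge> 0"
    and shift: "\<And>x t. (\<And>s. s \<ge> 0 \<Longrightarrow> (x has_vector_derivative (M *v x s)) (at s within {0..}))
      \<Longrightarrow> t \<ge> 0 \<Longrightarrow> x (t + h) = F (x t)"
  shows "exact_scheme step h M"
  unfolding exact_scheme_def
proof (intro allI impI, elim conjE)
  fix xs x k
  assume steps: "\<forall>k. step (xs k) (xs (Suc k))" and "x 0 = xs 0"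
    and "\<forall>t\<ge>0. (x has_vector_derivative (M *v x t)) (at t within {0..})"
  then have flow: "x (t + h) = F (x t)" if "t \<ge> 0" for t
    using shift that by blast
  show "xs k = x (real k * h)"
  proof (induction k)
    case 0
    then show ?case
      using \<open>x 0 = xs 0\<close> by simp
  next
    case (Suc k)
    have "xs (Suc k) = F (x (real k * h))"
      using step[OF steps[rule_format, of k]] Suc.IH by simp
    also have "\<dots> = x (real k * h + h)"
      using flow \<open>h \<ge> 0\<close> by simp
    finally show ?case
      by (simp add: distrib_right add.commute)
  qed
qed

lemma quadratic_interpolation:
  fixes l1 l2 l3 e1 e2 e3 \<phi> \<psi> q :: complex
  assumes distinct: "l1 \<noteq> l2" and sum: "l1 + l2 \<noteq> 0" and "l3 \<noteq> 0"
    and den: "l1 * l2 * (l2 - l1) * (l3\<^sup>2 - l2\<^sup>2) - l2 * l3 * (l3 - l2) * (l2\<^sup>2 - l1\<^sup>2) \<noteq> 0"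
    and phi: "\<phi> = ((l3\<^sup>2 - l2\<^sup>2) * (l2\<^sup>2 * e1 - l1\<^sup>2 * e2) - (l2\<^sup>2 - l1\<^sup>2) * (l3\<^sup>2 * e2 - l2\<^sup>2 * e3))
                  / (l1 * l2 * (l2 - l1) * (l3\<^sup>2 - l2\<^sup>2) - l2 * l3 * (l3 - l2) * (l2\<^sup>2 - l1\<^sup>2))"
    and psi: "\<psi> = (l2\<^sup>2 * e1 - l1\<^sup>2 * e2 - l1 * l2 * (l2 - l1) * \<phi>) / (l2\<^sup>2 - l1\<^sup>2)"
    and q: "q = (e3 - \<psi> - l3 * \<phi>) / l3\<^sup>2"
  shows "q * l1\<^sup>2 + \<phi> * l1 + \<psi> = e1" "q * l2\<^sup>2 + \<phi> * l2 + \<psi> = e2" "q * l3\<^sup>2 + \<phi> * l3 + \<psi> = e3"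
proof -
  define r where "r l e = q * l\<^sup>2 + \<phi> * l + \<psi> - e" for l e
  have "l2 \<noteq> 0"
    using den by auto
  have "l2\<^sup>2 - l1\<^sup>2 \<noteq> 0"
  proof
    assume "l2\<^sup>2 - l1\<^sup>2 = 0"
    then have "(l2 - l1) * (l2 + l1) = 0"
      by (simp add: power2_eq_square algebra_simps)
    then show False
      using distinct sum by (auto simp: add.commute)
  qed
  have r3: "r l3 e3 = 0"
    unfolding r_def q using \<open>l3 \<noteq> 0\<close> by (simp add: field_simps power2_eq_square)
  have r12: "l2\<^sup>2 * r l1 e1 - l1\<^sup>2 * r l2 e2 = 0"
    using psi \<open>l2\<^sup>2 - l1\<^sup>2 \<noteq> 0\<close> unfolding r_def by (simp add: field_simps power2_eq_square)
  have "(l3\<^sup>2 - l2\<^sup>2) * (l2\<^sup>2 * r l1 e1 - l1\<^sup>2 * r l2 e2)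
      - (l2\<^sup>2 - l1\<^sup>2) * (l3\<^sup>2 * r l2 e2 - l2\<^sup>2 * r l3 e3) = 0"
    using phi den unfolding r_def by (simp add: field_simps power2_eq_square)
  then have "l3\<^sup>2 * r l2 e2 - l2\<^sup>2 * r l3 e3 = 0"
    using r12 \<open>l2\<^sup>2 - l1\<^sup>2 \<noteq> 0\<close> by simp
  then have r2: "r l2 e2 = 0"
    using r3 \<open>l3 \<noteq> 0\<close> by simp
  then have "r l1 e1 = 0"
    using r12 \<open>l2 \<noteq> 0\<close> by simp
  then show "q * l1\<^sup>2 + \<phi> * l1 + \<psi> = e1" "q * l2\<^sup>2 + \<phi> * l2 + \<psi> = e2" "q * l3\<^sup>2 + \<phi> * l3 + \<psi> = e3"
    using r2 r3 by (simp_all add: r_def)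
qed

theorem mainTheorem12:
  fixes A :: "complex^3^3" and l1 l2 l3 :: complex and h :: real
    and \<phi> \<psi> \<theta> :: complex
  assumes ev: "is_eigenvalue A l1" "is_eigenvalue A l2" "is_eigenvalue A l3"
    and dist: "l1 \<noteq> l2" "l1 \<noteq> l3" "l2 \<noteq> l3"
    and sum: "l1 + l2 \<noteq> 0"
    and h: "h > 0"
    and den: "l1 * l2 * (l2 - l1) * (l3\<^sup>2 - l2\<^sup>2) - l2 * l3 * (l3 - l2) * (l2\<^sup>2 - l1\<^sup>2) \<noteq> 0"
    and phi_def: "\<phi> = ((l3\<^sup>2 - l2\<^sup>2) * (l2\<^sup>2 * exp (l1 * h) - l1\<^sup>2 * exp (l2 * h))
                      - (l2\<^sup>2 - l1\<^sup>2) * (l3\<^sup>2 * exp (l2 * h) - l2\<^sup>2 * exp (l3 * h)))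
                  / (l1 * l2 * (l2 - l1) * (l3\<^sup>2 - l2\<^sup>2) - l2 * l3 * (l3 - l2) * (l2\<^sup>2 - l1\<^sup>2))"
    and psi_def: "\<psi> = (l2\<^sup>2 * exp (l1 * h) - l1\<^sup>2 * exp (l2 * h) - l1 * l2 * (l2 - l1) * \<phi>)
                  / (l2\<^sup>2 - l1\<^sup>2)"
    and theta_def: "\<theta> = (exp (l3 * h) - \<psi> - l3 * \<phi>) / (l3\<^sup>2 * \<phi>\<^sup>2)"
    and defined: "\<phi> \<noteq> 0" "l3 \<noteq> 0"
  shows "exact_scheme
           (\<lambda>xk xk1. inverse \<phi> *s (xk1 - \<psi> *s xk) = A *v xk + (\<theta> * \<phi>) *s ((A ** A) *v xk))
           h A"
proof (rule exact_schemeI[where F = "mpoly2 A (\<theta> * \<phi>\<^sup>2) \<phi> \<psi>"])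
  fix u v :: "complex^3"
  assume "inverse \<phi> *s (v - \<psi> *s u) = A *v u + (\<theta> * \<phi>) *s ((A ** A) *v u)"
  then have "\<forall>i. inverse \<phi> * (v $ i - \<psi> * u $ i) = (A *v u) $ i + \<theta> * \<phi> * (A *v (A *v u)) $ i"
    by (simp add: vec_eq_iff matrix_vector_mul_assoc[symmetric] right_diff_distrib mult.assoc)
  then show "v = mpoly2 A (\<theta> * \<phi>\<^sup>2) \<phi> \<psi> u"
    using defined(1) by (simp add: mpoly2_def vec_eq_iff field_simps power2_eq_square)
next
  show "h \<ge> 0"
    using h by simp
next
  fix x :: "real \<Rightarrow> complex^3" and t :: real
  assume sol: "\<And>s. s \<ge> 0 \<Longrightarrow> (x has_vector_derivative (A *v x s)) (at s within {0..})"
    and "t \<ge> 0"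
  have "\<theta> * \<phi>\<^sup>2 = (exp (l3 * h) - \<psi> - l3 * \<phi>) / l3\<^sup>2"
    using defined by (simp add: theta_def field_simps)
  from quadratic_interpolation[OF dist(1) sum defined(2) den phi_def psi_def this]
  show "x (t + h) = mpoly2 A (\<theta> * \<phi>\<^sup>2) \<phi> \<psi> (x t)"
    using time_shift_eq_mpoly2[OF ev dist _ _ _ sol \<open>t \<ge> 0\<close>] h by simp
qed

end
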